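(* Let $k\ge1$, let $F$ be a partially colored forest and let $F'$ be an induced connected subgraph of $F$ (with the partial coloring inherited from $F$). If no vertex $v\in V(F')$ has a colored neighbor in $V(F)\setminus V(F')$, and Bob can win the $k$-Expanded Coloring Game on $F'$, then Bob can win the $k$-coloring game on $F$.
   Context: A partial coloring of a graph assigns to some vertices colors from a fixed set $C$ of $k$ colors so that adjacent colored vertices get different colors; a color is legal for an uncolored vertex $v$ if no neighbor of $v$ has that color. The $k$-coloring game on a partially colored graph: Alice and Bob alternate turns, Alice first, each coloring an uncolored vertex with a legal color from $C$; Bob wins if at some point an uncolored vertex has no legal color, Alice wins if all vertices become colored. The $k$-Expanded Coloring Game ($k$-ECG) on a partially colored forest is the same as the $k$-coloring game except that on her turn Alice may choose not to color a vertex, and if she does not color a vertex she may instead add to the forest a single new colored leaf (a new vertex joined to exactly one existing vertex, colored with a color from $C$). *)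

theory Defs
  imports Main
begin

(* Colour set C = {..<k}.  A partial colouring is col :: 'v \<Rightarrow> nat option
   (None = uncoloured). *)

definition is_cycle :: "('v \<times> 'v) set \<Rightarrow> 'v list \<Rightarrow> bool" where
  "is_cycle E xs \<longleftrightarrow> length xs \<ge> 3 \<and> distinct xs \<and>
     (\<forall>i. i + 1 < length xs \<longrightarrow> (xs ! i, xs ! (i + 1)) \<in> E) \<and> (last xs, hd xs) \<in> E"

definition is_forest :: "'v set \<Rightarrow> ('v \<times> 'v) set \<Rightarrow> bool" where
  "is_forest V E \<longleftrightarrow> finite V \<and> E \<subseteq> V \<times> V \<and> sym E \<and> irrefl E \<and>
     \<not> (\<exists>xs. set xs \<subseteq> V \<and> is_cycle E xs)"

definition proper_partial_coloring :: "nat \<Rightarrow> 'v set \<Rightarrow> ('v \<times> 'v) set \<Rightarrow> ('v \<Rightarrow> nat option) \<Rightarrow> bool" where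
  "proper_partial_coloring k V E col \<longleftrightarrow>
     (\<forall>v\<in>V. \<forall>c. col v = Some c \<longrightarrow> c < k) \<and>
     (\<forall>(u, v)\<in>E. col u \<noteq> None \<longrightarrow> col u \<noteq> col v)"

definition partially_colored_forest :: "nat \<Rightarrow> 'v set \<Rightarrow> ('v \<times> 'v) set \<Rightarrow> ('v \<Rightarrow> nat option) \<Rightarrow> bool" where
  "partially_colored_forest k V E col \<longleftrightarrow> is_forest V E \<and> proper_partial_coloring k V E col"

definition connected_graph :: "'v set \<Rightarrow> ('v \<times> 'v) set \<Rightarrow> bool" where
  "connected_graph V E \<longleftrightarrow> V \<noteq> {} \<and> (\<forall>u\<in>V. \<forall>w\<in>V. (u, w) \<in> E\<^sup>*)"

definition induced_edges :: "('v \<times> 'v) set \<Rightarrow> 'v set \<Rightarrow> ('v \<times> 'v) set" where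
  "induced_edges E W = E \<inter> (W \<times> W)"

definition legal :: "nat \<Rightarrow> ('v \<times> 'v) set \<Rightarrow> ('v \<Rightarrow> nat option) \<Rightarrow> 'v \<Rightarrow> nat \<Rightarrow> bool" where
  "legal k E col v c \<longleftrightarrow> c < k \<and> (\<forall>u. (u, v) \<in> E \<longrightarrow> col u \<noteq> Some c)"

(* some uncoloured vertex has no legal colour: Bob has won *)
definition stuck :: "nat \<Rightarrow> 'v set \<Rightarrow> ('v \<times> 'v) set \<Rightarrow> ('v \<Rightarrow> nat option) \<Rightarrow> bool" where
  "stuck k V E col \<longleftrightarrow> (\<exists>v\<in>V. col v = None \<and> (\<forall>c. \<not> legal k E col v c))"

definition has_uncolored :: "'v set \<Rightarrow> ('v \<Rightarrow> nat option) \<Rightarrow> bool" where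
  "has_uncolored V col \<longleftrightarrow> (\<exists>v\<in>V. col v = None)"

definition color_move :: "nat \<Rightarrow> 'v set \<Rightarrow> ('v \<times> 'v) set \<Rightarrow> ('v \<Rightarrow> nat option) \<Rightarrow> ('v \<Rightarrow> nat option) \<Rightarrow> bool" where
  "color_move k V E col col' \<longleftrightarrow>
     (\<exists>v\<in>V. \<exists>c. col v = None \<and> legal k E col v c \<and> col' = col(v := Some c))"

(* k-coloring game on (V,E,col).  cg_bobA: Alice to move and Bob has a strategy forcing a win
   (in finitely many moves); cg_bobB: the same with Bob to move. *)
inductive cg_bobA and cg_bobB for k :: nat and V :: "'v set" and E :: "('v \<times> 'v) set" where
  cgA_stuck: "stuck k V E col \<Longrightarrow> cg_bobA k V E col"
| cgA_move: "has_uncolored V col \<Longrightarrow> (\<And>col'. color_move k V E col col' \<Longrightarrow> cg_bobB k V E col')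
      \<Longrightarrow> cg_bobA k V E col"
| cgB_stuck: "stuck k V E col \<Longrightarrow> cg_bobB k V E col"
| cgB_move: "color_move k V E col col' \<Longrightarrow> cg_bobA k V E col' \<Longrightarrow> cg_bobB k V E col"

definition bob_wins_coloring_game :: "nat \<Rightarrow> 'v set \<Rightarrow> ('v \<times> 'v) set \<Rightarrow> ('v \<Rightarrow> nat option) \<Rightarrow> bool" where
  "bob_wins_coloring_game k V E col \<longleftrightarrow> cg_bobA k V E col"

(* k-Expanded Coloring Game.  Alice may colour a vertex, pass, or add a new coloured leaf
   (fresh vertex x attached to an existing vertex u, coloured c \<in> C, properly). *)
inductive ecg_bobA and ecg_bobB for k :: nat where
  ecgA_stuck: "stuck k V E col \<Longrightarrow> ecg_bobA k V E col"
| ecgA_move: "has_uncolored V col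
      \<Longrightarrow> (\<And>col'. color_move k V E col col' \<Longrightarrow> ecg_bobB k V E col')
      \<Longrightarrow> ecg_bobB k V E col
      \<Longrightarrow> (\<And>u x c. u \<in> V \<Longrightarrow> x \<notin> V \<Longrightarrow> c < k \<Longrightarrow> col u \<noteq> Some c \<Longrightarrow>
             ecg_bobB k (insert x V) (E \<union> {(x, u), (u, x)}) (col(x := Some c)))
      \<Longrightarrow> ecg_bobA k V E col"
| ecgB_stuck: "stuck k V E col \<Longrightarrow> ecg_bobB k V E col"
| ecgB_move: "color_move k V E col col' \<Longrightarrow> ecg_bobA k V E col' \<Longrightarrow> ecg_bobB k V E col"

definition bob_wins_ECG :: "nat \<Rightarrow> 'v set \<Rightarrow> ('v \<times> 'v) set \<Rightarrow> ('v \<Rightarrow> nat option) \<Rightarrow> bool" where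
  "bob_wins_ECG k V E col \<longleftrightarrow> ecg_bobA k V E col"

end

theory Submission imports Defs begin

text \<open>Bob plays the coloring game on \<open>F = (V, E)\<close> by following his ECG strategy on \<open>F'\<close>,
  the forest induced on \<open>V'\<close>. Alice's moves on \<open>F'\<close> are copied verbatim. A move of Alice
  outside \<open>F'\<close> is a pass in the ECG unless the vertex has a neighbour in \<open>F'\<close>; since \<open>F\<close> is
  a forest and \<open>F'\<close> is connected, it then has exactly one such neighbour, so for \<open>F'\<close> the move
  looks like adding a colored leaf. Bob's answers always lie in \<open>F'\<close>, and a vertex stuck in
  the ECG position is stuck in \<open>F\<close> as well.\<close>

lemma rtrancl_induced_imp_distinct_walk:
  assumes "(a, b) \<in> (E \<inter> W \<times> W)\<^sup>*" "b \<in> W"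
  shows "\<exists>p. p \<noteq> [] \<and> hd p = a \<and> last p = b \<and> distinct p \<and> set p \<subseteq> W \<and>
    successively (\<lambda>x y. (x, y) \<in> E) p"
  using assms
proof (induction rule: converse_rtrancl_induct)
  case base
  show ?case by (intro exI[of _ "[b]"]) (use base in auto)
next
  case (step a y)
  then obtain p where p: "p \<noteq> []" "hd p = y" "last p = b" "distinct p" "set p \<subseteq> W"
    "successively (\<lambda>x y. (x, y) \<in> E) p"
    by blast
  have a: "a \<in> W" "(a, y) \<in> E" using step.hyps by auto
  show ?case
  proof (cases "a \<in> set p")
    case True
    then obtain i where i: "i < length p" "p ! i = a" by (metis in_set_conv_nth)
    have "successively (\<lambda>x y. (x, y) \<in> E) (drop i p)"
      using p(6) successively_append_iff[of _ "take i p" "drop i p"] by simp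
    moreover have "set (drop i p) \<subseteq> W" using p(5) by (meson set_drop_subset subset_trans)
    ultimately show ?thesis
      using i p by (intro exI[of _ "drop i p"]) (simp add: hd_drop_conv_nth last_drop)
  next
    case False
    then show ?thesis using p a by (intro exI[of _ "a # p"]) (auto simp: successively_Cons)
  qed
qed

text \<open>Two neighbours of \<open>w\<close> joined by a path avoiding \<open>w\<close> would close a cycle.\<close>

lemma forest_unique_neighbour_in_connected:
  assumes forest: "is_forest V E" and conn: "connected_graph V' (induced_edges E V')"
    and "V' \<subseteq> V" "w \<in> V - V'" "u \<in> V'" "v \<in> V'" "(w, u) \<in> E" "(w, v) \<in> E"
  shows "u = v"
proof (rule ccontr)
  assume "u \<noteq> v"
  have "(u, v) \<in> (E \<inter> V' \<times> V')\<^sup>*"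
    using conn assms by (auto simp: connected_graph_def induced_edges_def)
  then obtain p where p: "p \<noteq> []" "hd p = u" "last p = v" "distinct p" "set p \<subseteq> V'"
    "successively (\<lambda>x y. (x, y) \<in> E) p"
    using rtrancl_induced_imp_distinct_walk \<open>v \<in> V'\<close> by metis
  have "length p \<ge> 2" using p \<open>u \<noteq> v\<close> by (cases p) (auto simp: Suc_le_eq)
  moreover have "successively (\<lambda>x y. (x, y) \<in> E) (w # p)"
    using p assms by (simp add: successively_Cons)
  moreover have "(v, w) \<in> E" using forest \<open>(w, v) \<in> E\<close> by (auto simp: is_forest_def dest: symD)
  ultimately have "is_cycle E (w # p)"
    using p assms successively_nth[of "\<lambda>x y. (x, y) \<in> E" "w # p"]
    by (auto simp: is_cycle_def)
  moreover have "set (w # p) \<subseteq> V" using p assms by auto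
  ultimately show False using forest by (auto simp: is_forest_def)
qed

text \<open>An ECG position \<open>(W, EW, ce)\<close> reached by the simulation of a coloring-game position
  \<open>(V, E, cf)\<close>: \<open>W - V'\<close> are the outside vertices colored next to \<open>V'\<close>, turned into leaves.
  The last clause makes legality of a color at a vertex of \<open>V'\<close> the same in both games.\<close>

definition ecg_mirrors ::
  "'v set \<Rightarrow> 'v set \<Rightarrow> ('v \<times> 'v) set \<Rightarrow> 'v set \<Rightarrow> ('v \<times> 'v) set \<Rightarrow>
    ('v \<Rightarrow> nat option) \<Rightarrow> ('v \<Rightarrow> nat option) \<Rightarrow> bool" where
  "ecg_mirrors V' V E W EW cf ce \<longleftrightarrow> V' \<subseteq> W \<and> W \<subseteq> V \<and> induced_edges E V' \<subseteq> EW \<and>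
     EW \<subseteq> E \<and> EW \<subseteq> W \<times> W \<and> (\<forall>x\<in>W. cf x = ce x) \<and> (\<forall>x\<in>W - V'. cf x \<noteq> None) \<and>
     (\<forall>v\<in>V'. \<forall>u. (u, v) \<in> E \<longrightarrow> cf u \<noteq> None \<longrightarrow> (u, v) \<in> EW)"

lemma ecg_mirrorsD:
  assumes "ecg_mirrors V' V E W EW cf ce"
  shows "V' \<subseteq> W" "W \<subseteq> V" "induced_edges E V' \<subseteq> EW" "EW \<subseteq> E" "EW \<subseteq> W \<times> W"
    "\<And>x. x \<in> W \<Longrightarrow> cf x = ce x" "\<And>x. x \<in> W \<Longrightarrow> x \<notin> V' \<Longrightarrow> cf x \<noteq> None"
    "\<And>v u. v \<in> V' \<Longrightarrow> (u, v) \<in> E \<Longrightarrow> cf u \<noteq> None \<Longrightarrow> (u, v) \<in> EW"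
  using assms unfolding ecg_mirrors_def by blast+

lemma ecg_mirrors_initial:
  assumes "sym E" "E \<subseteq> V \<times> V" "V' \<subseteq> V"
    and "\<forall>v\<in>V'. \<forall>u\<in>V - V'. (v, u) \<in> E \<longrightarrow> col u = None"
  shows "ecg_mirrors V' V E V' (induced_edges E V') col col"
  unfolding ecg_mirrors_def
proof (intro conjI ballI allI impI)
  fix v u assume "v \<in> V'" "(u, v) \<in> E" "col u \<noteq> None"
  moreover from this have "(v, u) \<in> E" "u \<in> V" using assms(1,2) by (auto dest: symD)
  ultimately have "u \<in> V'" using assms(4) by (metis DiffI)
  then show "(u, v) \<in> induced_edges E V'"
    using \<open>v \<in> V'\<close> \<open>(u, v) \<in> E\<close> by (simp add: induced_edges_def)
qed (use assms(3) in \<open>auto simp: induced_edges_def\<close>)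

lemma legal_if_ecg_mirrors:
  assumes M: "ecg_mirrors V' V E W EW cf ce" and "legal k E cf v c"
  shows "legal k EW ce v c"
  unfolding legal_def
proof (intro conjI allI impI)
  show "c < k" using assms(2) by (simp add: legal_def)
  fix u assume "(u, v) \<in> EW"
  then have "(u, v) \<in> E" "cf u = ce u" using ecg_mirrorsD(4-6)[OF M] by auto
  then show "ce u \<noteq> Some c" using assms(2) by (auto simp: legal_def)
qed

lemma legal_of_ecg_mirrors:
  assumes M: "ecg_mirrors V' V E W EW cf ce" and "v \<in> V'" "legal k EW ce v c"
  shows "legal k E cf v c"
  unfolding legal_def
proof (intro conjI allI impI notI)
  show "c < k" using assms by (simp add: legal_def)
  fix u assume "(u, v) \<in> E" "cf u = Some c"
  then have "(u, v) \<in> EW" using ecg_mirrorsD(8)[OF M \<open>v \<in> V'\<close>] by simp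
  moreover from this have "ce u = Some c"
    using ecg_mirrorsD(5,6)[OF M] \<open>cf u = Some c\<close> by auto
  ultimately show False using assms(3) by (auto simp: legal_def)
qed

lemma stuck_of_ecg_mirrors:
  assumes M: "ecg_mirrors V' V E W EW cf ce" and "stuck k W EW ce"
  shows "stuck k V E cf"
proof -
  obtain v where v: "v \<in> W" "ce v = None" "\<And>c. \<not> legal k EW ce v c"
    using assms(2) by (auto simp: stuck_def)
  then have "v \<in> V" "cf v = None" using ecg_mirrorsD(2,6)[OF M] by auto
  then show ?thesis using v(3) legal_if_ecg_mirrors[OF M] unfolding stuck_def by blast
qed

lemma ecg_mirrors_color_inner:
  assumes M: "ecg_mirrors V' V E W EW cf ce" and "v \<in> V'"
  shows "ecg_mirrors V' V E W EW (cf(v := Some c)) (ce(v := Some c))"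
  unfolding ecg_mirrors_def
proof (intro conjI ballI allI impI)
  fix y u assume "y \<in> V'" "(u, y) \<in> E" "(cf(v := Some c)) u \<noteq> None"
  then show "(u, y) \<in> EW"
    using ecg_mirrorsD(3,8)[OF M] \<open>v \<in> V'\<close> by (cases "u = v") (auto simp: induced_edges_def)
next
  fix x assume "x \<in> W"
  then show "(cf(v := Some c)) x = (ce(v := Some c)) x" using ecg_mirrorsD(6)[OF M] by simp
next
  fix x assume "x \<in> W - V'"
  then show "(cf(v := Some c)) x \<noteq> None" using ecg_mirrorsD(7)[OF M] by simp
qed (rule ecg_mirrorsD[OF M])+

lemma ecg_mirrors_color_far:
  assumes M: "ecg_mirrors V' V E W EW cf ce" and "sym E" "w \<notin> W"
    and "\<forall>u\<in>V'. (w, u) \<notin> E"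
  shows "ecg_mirrors V' V E W EW (cf(w := Some c)) ce"
  unfolding ecg_mirrors_def
proof (intro conjI ballI allI impI)
  fix v u assume "v \<in> V'" "(u, v) \<in> E" "(cf(w := Some c)) u \<noteq> None"
  moreover from this have "u \<noteq> w" using assms(2,4) by (auto dest: symD)
  ultimately show "(u, v) \<in> EW" using ecg_mirrorsD(8)[OF M] by simp
next
  fix x assume "x \<in> W"
  then show "(cf(w := Some c)) x = ce x" using ecg_mirrorsD(6)[OF M] \<open>w \<notin> W\<close> by auto
next
  fix x assume "x \<in> W - V'"
  then show "(cf(w := Some c)) x \<noteq> None" using ecg_mirrorsD(7)[OF M] by simp
qed (rule ecg_mirrorsD[OF M])+

lemma ecg_mirrors_color_leaf:
  assumes M: "ecg_mirrors V' V E W EW cf ce" and "sym E" "w \<in> V"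
    and "u \<in> V'" "(w, u) \<in> E" and unique: "\<And>v. v \<in> V' \<Longrightarrow> (w, v) \<in> E \<Longrightarrow> v = u"
  shows "ecg_mirrors V' V E (insert w W) (EW \<union> {(w, u), (u, w)})
    (cf(w := Some c)) (ce(w := Some c))"
  unfolding ecg_mirrors_def
proof (intro conjI ballI allI impI)
  fix v u' assume "v \<in> V'" "(u', v) \<in> E" "(cf(w := Some c)) u' \<noteq> None"
  then show "(u', v) \<in> EW \<union> {(w, u), (u, w)}"
    using ecg_mirrorsD(8)[OF M] unique by (cases "u' = w") auto
next
  fix x assume "x \<in> insert w W"
  then show "(cf(w := Some c)) x = (ce(w := Some c)) x" using ecg_mirrorsD(6)[OF M] by auto
next
  fix x assume "x \<in> insert w W - V'"
  then show "(cf(w := Some c)) x \<noteq> None" using ecg_mirrorsD(7)[OF M] by auto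
next
  show "EW \<union> {(w, u), (u, w)} \<subseteq> E" using ecg_mirrorsD(4)[OF M] assms(2,5) by (auto dest: symD)
  show "EW \<union> {(w, u), (u, w)} \<subseteq> insert w W \<times> insert w W"
    using ecg_mirrorsD(1,5)[OF M] \<open>u \<in> V'\<close> by blast
qed (use ecg_mirrorsD(1-3)[OF M] \<open>w \<in> V\<close> in blast)+

lemma bob_wins_coloring_game_if_ecg_mirrors:
  assumes "sym E"
    and unique: "\<And>w u v. w \<in> V - V' \<Longrightarrow> u \<in> V' \<Longrightarrow> v \<in> V' \<Longrightarrow> (w, u) \<in> E \<Longrightarrow> (w, v) \<in> E
      \<Longrightarrow> u = v"
  shows "ecg_bobA k W EW ce \<Longrightarrow> ecg_mirrors V' V E W EW cf ce \<Longrightarrow> cg_bobA k V E cf"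
    and "ecg_bobB k W EW ce \<Longrightarrow> ecg_mirrors V' V E W EW cf ce \<Longrightarrow> cg_bobB k V E cf"
proof (induction arbitrary: cf and cf rule: ecg_bobA_ecg_bobB.inducts)
  case (ecgA_stuck W EW ce)
  then show ?case by (blast intro: cgA_stuck stuck_of_ecg_mirrors)
next
  case (ecgB_stuck W EW ce)
  then show ?case by (blast intro: cgB_stuck stuck_of_ecg_mirrors)
next
  case (ecgB_move W EW ce ce')
  note M = ecg_mirrorsD[OF ecgB_move(4)]
  from ecgB_move(1) obtain v c where v: "v \<in> W" "ce v = None" "legal k EW ce v c"
    "ce' = ce(v := Some c)" by (auto simp: color_move_def)
  have "cf v = None" using M(6) v by simp
  then have "v \<in> V'" using M(7) v(1) by blast
  then have "color_move k V E cf (cf(v := Some c))"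
    using M(1,2) \<open>cf v = None\<close> legal_of_ecg_mirrors[OF ecgB_move(4) \<open>v \<in> V'\<close> v(3)]
    unfolding color_move_def by blast
  moreover have "cg_bobA k V E (cf(v := Some c))"
    using ecgB_move(3)[unfolded v(4), OF ecg_mirrors_color_inner[OF ecgB_move(4) \<open>v \<in> V'\<close>]] .
  ultimately show ?case by (rule cgB_move)
next
  case (ecgA_move W ce EW)
  note M = ecg_mirrorsD[OF ecgA_move(8)]
  show ?case
  proof (rule cgA_move)
    show "has_uncolored V cf"
      using ecgA_move(1) M(2,6) unfolding has_uncolored_def by force
  next
    fix cf' assume "color_move k V E cf cf'"
    then obtain w c where w: "w \<in> V" "cf w = None" "legal k E cf w c" "cf' = cf(w := Some c)"
      by (auto simp: color_move_def)
    consider "w \<in> V'" | "w \<notin> W" "\<forall>u\<in>V'. (w, u) \<notin> E" | u where "w \<notin> W" "u \<in> V'" "(w, u) \<in> E"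
      using M(7) w(2) by blast
    then show "cg_bobB k V E cf'"
    proof cases
      case 1
      then have "w \<in> W" "ce w = None" using M(1,6) w(2) by auto
      then have "color_move k W EW ce (ce(w := Some c))"
        using legal_if_ecg_mirrors[OF ecgA_move(8) w(3)] unfolding color_move_def by blast
      then show ?thesis
        unfolding w(4) by (rule ecgA_move(3)[OF _ ecg_mirrors_color_inner[OF ecgA_move(8) 1]])
    next
      case 2
      show ?thesis
        unfolding w(4) by (rule ecgA_move(5)[OF ecg_mirrors_color_far[OF ecgA_move(8) \<open>sym E\<close> 2]])
    next
      case 3
      have "(u, w) \<in> E" using 3 \<open>sym E\<close> by (auto dest: symD)
      then have "c < k" "cf u \<noteq> Some c" using w(3) unfolding legal_def by auto
      have "u \<in> W" using M(1) 3 by blast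
      then have "ce u \<noteq> Some c" using M(6) \<open>cf u \<noteq> Some c\<close> by simp
      have unique_u: "v = u" if "v \<in> V'" "(w, v) \<in> E" for v
        using unique[of w v u] that 3 w(1) M(1) by blast
      show ?thesis
        unfolding w(4)
        by (rule ecgA_move(7)[OF \<open>u \<in> W\<close> 3(1) \<open>c < k\<close> \<open>ce u \<noteq> Some c\<close>
              ecg_mirrors_color_leaf[OF ecgA_move(8) \<open>sym E\<close> w(1) 3(2,3) unique_u]])
    qed
  qed
qed

theorem lemma3p1:
  fixes k :: nat and V V' :: "'v set" and E :: "('v \<times> 'v) set" and col :: "'v \<Rightarrow> nat option"
  assumes "infinite (UNIV :: 'v set)"
    and "k \<ge> 1"
    and "partially_colored_forest k V E col"
    and "V' \<subseteq> V"
    and "connected_graph V' (induced_edges E V')"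
    and "\<forall>v\<in>V'. \<forall>u\<in>V - V'. (v, u) \<in> E \<longrightarrow> col u = None"
    and "bob_wins_ECG k V' (induced_edges E V') col"
  shows "bob_wins_coloring_game k V E col"
proof -
  have forest: "is_forest V E" using assms(3) by (simp add: partially_colored_forest_def)
  then have "sym E" "E \<subseteq> V \<times> V" by (auto simp: is_forest_def)
  have mirrors: "ecg_mirrors V' V E V' (induced_edges E V') col col"
    by (rule ecg_mirrors_initial[OF \<open>sym E\<close> \<open>E \<subseteq> V \<times> V\<close> assms(4,6)])
  have unique: "u = v" if "w \<in> V - V'" "u \<in> V'" "v \<in> V'" "(w, u) \<in> E" "(w, v) \<in> E"
    for w u v
    using forest_unique_neighbour_in_connected[OF forest assms(5,4) that] .
  show ?thesis
    unfolding bob_wins_coloring_game_def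
    by (rule bob_wins_coloring_game_if_ecg_mirrors(1)[OF \<open>sym E\<close> unique])
      (use assms(7) mirrors in \<open>simp_all add: bob_wins_ECG_def\<close>)
qed

end
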